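(* For every permutation graph $G$, $\operatorname{box}(G)\le 2\Delta(G)+1$, where $\Delta(G)$ is the maximum degree of $G$.
   Context: For a permutation $\pi$ of $\{1,\dots,n\}$, the graph $G[\pi]$ has vertex set $\{1,\dots,n\}$ and an edge $ij$ iff $(i-j)(\pi^{-1}(i)-\pi^{-1}(j))<0$. A graph is a permutation graph if it is isomorphic to $G[\pi]$ for some permutation $\pi$. The boxicity $\operatorname{box}(G)$ is the minimum $b$ such that $G$ is the intersection graph of axis-parallel boxes in $\mathbb{R}^b$ (products of $b$ closed intervals), one box per vertex. *)

theory Defs
  imports Complex_Main "HOL-Combinatorics.Permutations"
begin

definition perm_edge :: "(nat \<Rightarrow> nat) \<Rightarrow> nat \<Rightarrow> nat \<Rightarrow> bool" where
  "perm_edge \<pi> i j \<longleftrightarrow>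
     (int i - int j) * (int (inv \<pi> i) - int (inv \<pi> j)) < 0"

definition is_permutation_graph :: "'a set \<Rightarrow> ('a \<Rightarrow> 'a \<Rightarrow> bool) \<Rightarrow> bool" where
  "is_permutation_graph V E \<longleftrightarrow>
     (\<exists>n \<pi> f. \<pi> permutes {1..n} \<and> bij_betw f V {1..n} \<and>
        (\<forall>u\<in>V. \<forall>v\<in>V. E u v \<longleftrightarrow> perm_edge \<pi> (f u) (f v)))"

definition box_rep :: "'a set \<Rightarrow> ('a \<Rightarrow> 'a \<Rightarrow> bool) \<Rightarrow> nat \<Rightarrow> bool" where
  "box_rep V E b \<longleftrightarrow>
     (\<exists>lo hi :: 'a \<Rightarrow> nat \<Rightarrow> real.
        (\<forall>v\<in>V. \<forall>k<b. lo v k \<le> hi v k) \<and>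
        (\<forall>u\<in>V. \<forall>v\<in>V. u \<noteq> v \<longrightarrow>
           (E u v \<longleftrightarrow> (\<forall>k<b. lo u k \<le> hi v k \<and> lo v k \<le> hi u k))))"

definition boxicity :: "'a set \<Rightarrow> ('a \<Rightarrow> 'a \<Rightarrow> bool) \<Rightarrow> nat" where
  "boxicity V E = (LEAST b. box_rep V E b)"

definition degree :: "'a set \<Rightarrow> ('a \<Rightarrow> 'a \<Rightarrow> bool) \<Rightarrow> 'a \<Rightarrow> nat" where
  "degree V E v = card {u\<in>V. u \<noteq> v \<and> E v u}"

text \<open>Maximum degree (0 for the empty graph).\<close>
definition max_degree :: "'a set \<Rightarrow> ('a \<Rightarrow> 'a \<Rightarrow> bool) \<Rightarrow> nat" where
  "max_degree V E = Max (insert 0 (degree V E ` V))"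

end

theory Submission
  imports Defs
begin

text \<open>A permutation graph is the incomparability graph of the order in which u precedes v
  iff it does so both in the identity and in \<pi>. A greedy colouring splits the vertices into
  \<Delta>+1 independent sets, i.e. chains of this order. Every chain C yields one interval coordinate:
  the elements of C become points in chain order, and any other vertex v gets the interval between
  the elements of C below v and those above v. Incomparable vertices then meet in every coordinate,
  while u < v are separated in the coordinate of the chain containing u. Hence the boxicity is
  even at most \<Delta>+1.\<close>

lemma perm_edge_iff:
  "perm_edge \<pi> i j \<longleftrightarrow> (i < j \<and> inv \<pi> j < inv \<pi> i) \<or> (j < i \<and> inv \<pi> i < inv \<pi> j)"
  unfolding perm_edge_def mult_less_0_iff by auto

lemma permutation_graph_finite: "is_permutation_graph V E \<Longrightarrow> finite V"
  unfolding is_permutation_graph_def using bij_betw_finite by blast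

lemma permutation_graph_incomparability_graph:
  assumes "is_permutation_graph V E"
  obtains lt where "irreflp_on V lt" and "transp_on V lt"
    and "\<And>u v. u \<in> V \<Longrightarrow> v \<in> V \<Longrightarrow> u \<noteq> v \<Longrightarrow> E u v \<longleftrightarrow> \<not> lt u v \<and> \<not> lt v u"
proof -
  obtain n \<pi> f where \<pi>: "\<pi> permutes {1..n}" and f: "bij_betw f V {1..n}"
    and E: "\<And>u v. u \<in> V \<Longrightarrow> v \<in> V \<Longrightarrow> E u v \<longleftrightarrow> perm_edge \<pi> (f u) (f v)"
    using assms unfolding is_permutation_graph_def by blast
  define lt where "lt u v \<longleftrightarrow> f u < f v \<and> inv \<pi> (f u) < inv \<pi> (f v)" for u v
  have "irreflp_on V lt" "transp_on V lt"
    unfolding lt_def irreflp_on_def transp_on_def by auto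
  moreover have "E u v \<longleftrightarrow> \<not> lt u v \<and> \<not> lt v u" if "u \<in> V" "v \<in> V" "u \<noteq> v" for u v
  proof -
    have "f u \<noteq> f v"
      using f that bij_betw_imp_inj_on inj_on_contraD by metis
    moreover have "inj (inv \<pi>)"
      using \<pi> permutes_inv permutes_inj by blast
    ultimately have "inv \<pi> (f u) \<noteq> inv \<pi> (f v)"
      by (simp add: inj_eq)
    with \<open>f u \<noteq> f v\<close> show ?thesis
      unfolding E[OF that(1,2)] perm_edge_iff lt_def by auto
  qed
  ultimately show thesis using that by blast
qed

lemma degree_le_max_degree: "finite V \<Longrightarrow> v \<in> V \<Longrightarrow> degree V E v \<le> max_degree V E"
  unfolding max_degree_def by (intro Max_ge) auto

lemma exists_unused_colour:
  fixes c :: "'a \<Rightarrow> nat"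
  assumes "finite N" and "card N \<le> D"
  obtains k where "k \<le> D" and "k \<notin> c ` N"
proof -
  have "card (c ` N) < card {..D}"
    using card_image_le[OF assms(1), of c] assms(2) by simp
  then have "\<not> {..D} \<subseteq> c ` N"
    using card_mono[OF finite_imageI[OF assms(1)]] by (metis not_le)
  then show thesis using that by blast
qed

lemma greedy_colouring:
  assumes "finite V"
    and sym: "\<And>u v. u \<in> V \<Longrightarrow> v \<in> V \<Longrightarrow> E u v \<Longrightarrow> E v u"
    and deg: "\<And>v. v \<in> V \<Longrightarrow> degree V E v \<le> D"
  obtains c :: "'a \<Rightarrow> nat" where "\<And>v. v \<in> V \<Longrightarrow> c v \<le> D"
    and "\<And>u v. u \<in> V \<Longrightarrow> v \<in> V \<Longrightarrow> u \<noteq> v \<Longrightarrow> E u v \<Longrightarrow> c u \<noteq> c v"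
proof -
  have "\<exists>c :: 'a \<Rightarrow> nat. (\<forall>v\<in>W. c v \<le> D) \<and> (\<forall>u\<in>W. \<forall>v\<in>W. u \<noteq> v \<longrightarrow> E u v \<longrightarrow> c u \<noteq> c v)"
    if "W \<subseteq> V" for W
    using finite_subset[OF that \<open>finite V\<close>] that
  proof (induction W rule: finite_subset_induct')
    case empty
    then show ?case by simp
  next
    case (insert w W)
    then obtain c :: "'a \<Rightarrow> nat" where c_le: "\<forall>v\<in>W. c v \<le> D"
      and c_proper: "\<forall>u\<in>W. \<forall>v\<in>W. u \<noteq> v \<longrightarrow> E u v \<longrightarrow> c u \<noteq> c v"
      by blast
    define N where "N = {u \<in> W. E w u}"
    have "card N \<le> degree V E w"
      unfolding degree_def by (rule card_mono) (use \<open>finite V\<close> insert in \<open>auto simp: N_def\<close>)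
    then have "card N \<le> D"
      using deg[OF \<open>w \<in> V\<close>] by simp
    then obtain k where "k \<le> D" and "k \<notin> c ` N"
      using exists_unused_colour[of N D c] \<open>finite W\<close> unfolding N_def by auto
    have k_fresh: "c x \<noteq> k" if "x \<in> W" "E w x \<or> E x w" for x
    proof -
      have "E w x"
        using that sym insert.hyps by blast
      with \<open>x \<in> W\<close> \<open>k \<notin> c ` N\<close> show ?thesis
        unfolding N_def by blast
    qed
    show ?case
      by (intro exI[of _ "c(w := k)"]) (use c_le c_proper k_fresh \<open>k \<le> D\<close> in auto)
  qed
  from this[OF order_refl] show thesis using that by blast
qed

text \<open>Counting strict and non-strict predecessors together doubles all coordinates: an element
  of the chain C of rank r sits at the point 2r+1, any other vertex gets an interval with even
  endpoints.\<close>

definition chain_lo :: "'a set \<Rightarrow> ('a \<Rightarrow> 'a \<Rightarrow> bool) \<Rightarrow> 'a \<Rightarrow> nat" where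
  "chain_lo C lt v = card {x \<in> C. lt x v} + card {x \<in> C. lt x v \<or> x = v}"

definition chain_hi :: "'a set \<Rightarrow> ('a \<Rightarrow> 'a \<Rightarrow> bool) \<Rightarrow> 'a \<Rightarrow> nat" where
  "chain_hi C lt v = card {x \<in> C. \<not> lt v x} + card {x \<in> C. \<not> lt v x \<and> x \<noteq> v}"

lemma chain_lo_le_chain_hi:
  assumes "finite C" "C \<subseteq> V" "transp_on V lt" "u \<in> V" "v \<in> V" "\<not> lt v u"
  shows "chain_lo C lt u \<le> chain_hi C lt v"
proof -
  have not_above_v: "\<not> lt v x" if "x \<in> C" "lt x u" for x
  proof
    assume "lt v x"
    with that assms have "lt v u" by (meson subsetD transp_onD)
    with \<open>\<not> lt v u\<close> show False ..
  qed
  have "card {x \<in> C. lt x u} \<le> card {x \<in> C. \<not> lt v x \<and> x \<noteq> v}"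
    by (rule card_mono) (use \<open>finite C\<close> not_above_v \<open>\<not> lt v u\<close> in auto)
  moreover have "card {x \<in> C. lt x u \<or> x = u} \<le> card {x \<in> C. \<not> lt v x}"
    by (rule card_mono) (use \<open>finite C\<close> not_above_v \<open>\<not> lt v u\<close> in auto)
  ultimately show ?thesis
    unfolding chain_lo_def chain_hi_def by simp
qed

lemma chain_hi_less_chain_lo:
  assumes "finite C" "C \<subseteq> V" "transp_on V lt" "u \<in> C" "v \<in> V" "lt u v"
    and chain: "\<And>x. x \<in> C \<Longrightarrow> x \<noteq> u \<Longrightarrow> lt x u \<or> lt u x"
  shows "chain_hi C lt u < chain_lo C lt v"
proof -
  have below_v: "lt x v" if "x \<in> C" "\<not> lt u x" for x
  proof (cases "x = u")
    case False
    with that chain have "lt x u" by blast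
    with that assms show ?thesis by (meson subsetD transp_onD)
  qed (use \<open>lt u v\<close> in simp)
  have "card {x \<in> C. \<not> lt u x} \<le> card {x \<in> C. lt x v}"
    by (rule card_mono) (use \<open>finite C\<close> below_v in auto)
  moreover have "card {x \<in> C. \<not> lt u x \<and> x \<noteq> u} < card {x \<in> C. lt x v \<or> x = v}"
    by (rule psubset_card_mono) (use \<open>finite C\<close> below_v assms(4,6) in auto)
  ultimately show ?thesis
    unfolding chain_lo_def chain_hi_def by simp
qed

lemma box_rep_incomparability_graph:
  assumes "finite V" and irrefl: "irreflp_on V lt" and trans: "transp_on V lt"
    and chains: "\<And>u v. u \<in> V \<Longrightarrow> v \<in> V \<Longrightarrow> u \<noteq> v \<Longrightarrow> c u = c v \<Longrightarrow> lt u v \<or> lt v u"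
    and colours: "\<And>v. v \<in> V \<Longrightarrow> c v < b"
    and E: "\<And>u v. u \<in> V \<Longrightarrow> v \<in> V \<Longrightarrow> u \<noteq> v \<Longrightarrow> E u v \<longleftrightarrow> \<not> lt u v \<and> \<not> lt v u"
  shows "box_rep V E b"
proof -
  define C where "C k = {x \<in> V. c x = k}" for k
  define lo where "lo v k = real (chain_lo (C k) lt v)" for v k
  define hi where "hi v k = real (chain_hi (C k) lt v)" for v k
  have C: "finite (C k)" "C k \<subseteq> V" for k
    using \<open>finite V\<close> unfolding C_def by auto
  have meet: "lo u k \<le> hi v k" if "u \<in> V" "v \<in> V" "\<not> lt v u" for u v k
    unfolding lo_def hi_def using chain_lo_le_chain_hi[OF C trans that] by simp
  have separate: "\<exists>k<b. hi u k < lo v k" if "u \<in> V" "v \<in> V" "lt u v" for u v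
  proof -
    have "chain_hi (C (c u)) lt u < chain_lo (C (c u)) lt v"
      by (rule chain_hi_less_chain_lo[OF C trans _ that(2,3)]) (use that chains in \<open>auto simp: C_def\<close>)
    then show ?thesis
      unfolding lo_def hi_def using colours[OF \<open>u \<in> V\<close>] by auto
  qed
  show ?thesis
    unfolding box_rep_def
  proof (intro exI conjI ballI allI impI)
    show "lo v k \<le> hi v k" if "v \<in> V" for v k
      using meet[OF that that] irreflp_onD[OF irrefl that] by blast
    show "E u v \<longleftrightarrow> (\<forall>k<b. lo u k \<le> hi v k \<and> lo v k \<le> hi u k)"
      if "u \<in> V" "v \<in> V" "u \<noteq> v" for u v
    proof
      assume "E u v"
      then have "\<not> lt u v" "\<not> lt v u"
        using E[OF that] by simp_all
      then show "\<forall>k<b. lo u k \<le> hi v k \<and> lo v k \<le> hi u k"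
        using meet[OF that(1,2)] meet[OF that(2,1)] by blast
    next
      assume "\<forall>k<b. lo u k \<le> hi v k \<and> lo v k \<le> hi u k"
      then have "\<not> lt u v" "\<not> lt v u"
        using separate[OF that(1,2)] separate[OF that(2,1)] by (meson leD)+
      then show "E u v"
        using E[OF that] by simp
    qed
  qed
qed

theorem theorem9:
  fixes V :: "'a set" and E :: "'a \<Rightarrow> 'a \<Rightarrow> bool"
  assumes "is_permutation_graph V E"
  shows "boxicity V E \<le> 2 * max_degree V E + 1"
proof -
  have "finite V"
    using assms by (rule permutation_graph_finite)
  obtain lt where irrefl: "irreflp_on V lt" and trans: "transp_on V lt"
    and E: "\<And>u v. u \<in> V \<Longrightarrow> v \<in> V \<Longrightarrow> u \<noteq> v \<Longrightarrow> E u v \<longleftrightarrow> \<not> lt u v \<and> \<not> lt v u"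
    using permutation_graph_incomparability_graph[OF assms] by blast
  have sym: "E v u" if "u \<in> V" "v \<in> V" "E u v" for u v
    using E that by (cases "u = v") auto
  obtain c :: "'a \<Rightarrow> nat" where c_le: "\<And>v. v \<in> V \<Longrightarrow> c v \<le> max_degree V E"
    and c_proper: "\<And>u v. u \<in> V \<Longrightarrow> v \<in> V \<Longrightarrow> u \<noteq> v \<Longrightarrow> E u v \<Longrightarrow> c u \<noteq> c v"
    using greedy_colouring[of V E, OF \<open>finite V\<close> sym degree_le_max_degree[OF \<open>finite V\<close>]]
    by blast
  have "box_rep V E (max_degree V E + 1)"
  proof (rule box_rep_incomparability_graph[OF \<open>finite V\<close> irrefl trans _ _ E])
    show "lt u v \<or> lt v u" if "u \<in> V" "v \<in> V" "u \<noteq> v" "c u = c v" for u v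
      using E[OF that(1-3)] c_proper[OF that(1-3)] that(4) by blast
    show "c v < max_degree V E + 1" if "v \<in> V" for v
      using c_le[OF that] by simp
  qed
  then have "boxicity V E \<le> max_degree V E + 1"
    unfolding boxicity_def by (rule Least_le)
  then show ?thesis by simp
qed

end
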